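(* Let $\mathbb{H}=\{z\in\mathbb{C}:\operatorname{Im}z>0\}$ and $p\ge1$. For all $z_1,z_2\in\mathbb{H}$, \[ b_{\mathbb{H},p}(z_1,z_2)\le\frac{|z_1-z_2|}{\max\{\operatorname{Im}(z_1),\operatorname{Im}(z_2)\}}. \]
   Context: For $z_1,z_2\in\mathbb{H}$ and $p\ge1$, $b_{\mathbb{H},p}(z_1,z_2)=\sup_{t\in\mathbb{R}}\frac{|z_1-z_2|}{\sqrt[p]{|z_1-t|^p+|t-z_2|^p}}$. *)

theory Defs
  imports "HOL-Analysis.Analysis"
begin

definition upper_half_plane :: "complex set" where
  "upper_half_plane = {z. Im z > 0}"

definition b_H :: "real \<Rightarrow> complex \<Rightarrow> complex \<Rightarrow> real" where
  "b_H p z1 z2 = (SUP t\<in>(UNIV::real set).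
      cmod (z1 - z2) / ((cmod (z1 - of_real t) powr p + cmod (of_real t - z2) powr p) powr (1 / p)))"

end

theory Submission
  imports Defs
begin

text \<open>Every real point t lies on the boundary of the upper half plane, so
  its distance to z_i is at least Im z_i. Hence the p-mean of the two distances,
  which dominates the larger of them, is at least max (Im z1) (Im z2), and this
  bounds every quotient in the supremum defining b_H.\<close>

lemma powr_le_powr_sum_root:
  fixes a b p :: real
  assumes "a \<ge> 0" "b \<ge> 0" "p > 0"
  shows "a \<le> (a powr p + b powr p) powr (1/p)"
proof (cases "a = 0")
  case False
  then have "a = (a powr p) powr (1/p)" using assms by (simp add: powr_powr)
  also have "\<dots> \<le> (a powr p + b powr p) powr (1/p)"
    using assms by (intro powr_mono2) auto
  finally show ?thesis .
qed simp

lemma max_le_powr_sum_root: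
  fixes a b p :: real
  assumes "a \<ge> 0" "b \<ge> 0" "p > 0"
  shows "max a b \<le> (a powr p + b powr p) powr (1/p)"
  using powr_le_powr_sum_root[of a b p] powr_le_powr_sum_root[of b a p] assms
  by (simp add: add.commute)

lemma Im_le_dist_of_real:
  fixes z :: complex and t :: real
  shows "Im z \<le> cmod (z - of_real t)"
  using abs_Im_le_cmod[of "z - of_real t"] by simp

theorem proposition3p27:
  fixes p :: real and z1 z2 :: complex
  assumes "p \<ge> 1" and "z1 \<in> upper_half_plane" and "z2 \<in> upper_half_plane"
  shows "b_H p z1 z2 \<le> cmod (z1 - z2) / max (Im z1) (Im z2)"
  unfolding b_H_def
proof (rule cSUP_least)
  fix t :: real
  let ?a = "cmod (z1 - of_real t)" and ?b = "cmod (of_real t - z2)"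
  have "max (Im z1) (Im z2) \<le> max ?a ?b"
    using Im_le_dist_of_real[of z1 t] Im_le_dist_of_real[of z2 t]
    by (intro max.mono) (simp_all add: norm_minus_commute)
  also have "\<dots> \<le> (?a powr p + ?b powr p) powr (1/p)"
    using assms(1) by (intro max_le_powr_sum_root) auto
  finally have root_ge: "max (Im z1) (Im z2) \<le> (?a powr p + ?b powr p) powr (1/p)" .
  have max_pos: "max (Im z1) (Im z2) > 0"
    using assms(2) by (simp add: upper_half_plane_def)
  show "cmod (z1 - z2) / (?a powr p + ?b powr p) powr (1/p)
      \<le> cmod (z1 - z2) / max (Im z1) (Im z2)"
    using root_ge max_pos less_le_trans[OF max_pos root_ge]
    by (intro divide_left_mono mult_pos_pos) (simp_all only: norm_ge_zero)
qed simp

end
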